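(* Let $m\ge 1$ and $u,v\in\{0,1\}^m$. Then there exists a tilde-transformation from $u$ to $v$ of length $\mathrm{dist}_\sim(u,v)$ in which, for every $i=1,\dots,m$, the symbol in position $i$ is modified by at most one of the operations. In other words, a minimal tilde-transformation from $u$ to $v$ always exists.
   Context: Words are over the binary alphabet $\{0,1\}$; for $w=a_1\cdots a_m$ write $w[i]=a_i$. The replacement $R_i$ replaces $a_i$ by the other binary symbol; it modifies position $i$. The swap $S_i$ is defined only when $a_i\neq a_{i+1}$ and exchanges $a_i$ and $a_{i+1}$; it modifies positions $i$ and $i+1$. For equal-length words $u,v$, the tilde-distance $\mathrm{dist}_\sim(u,v)$ is the minimum number of replacements and swaps needed to transform $u$ into $v$. A tilde-transformation of length $h$ from $u$ to $v$ is a sequence of words $(w_0,\dots,w_h)$ with $w_0=u$, $w_h=v$, and each $w_{k+1}$ obtained from $w_k$ by a single replacement or swap. It is minimal if $h=\mathrm{dist}_\sim(u,v)$ and each position is modified by at most one of its operations. *)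

theory Defs
  imports Main
begin

(* Binary words are lists of bool (False = 0, True = 1).  Positions are 1-based:
   w[i] = w ! (i - 1) for 1 <= i <= length w. *)

datatype op = Repl nat | Swap nat

fun apply_op :: "op \<Rightarrow> bool list \<Rightarrow> bool list \<Rightarrow> bool" where
  "apply_op (Repl i) w w' \<longleftrightarrow>
     1 \<le> i \<and> i \<le> length w \<and> w' = w[i - 1 := \<not> w ! (i - 1)]"
| "apply_op (Swap i) w w' \<longleftrightarrow>
     1 \<le> i \<and> i + 1 \<le> length w \<and> w ! (i - 1) \<noteq> w ! i \<and>
     w' = w[i - 1 := w ! i, i := w ! (i - 1)]"

fun modified :: "op \<Rightarrow> nat set" where
  "modified (Repl i) = {i}"
| "modified (Swap i) = {i, i + 1}"

definition tilde_transformation ::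
    "bool list \<Rightarrow> bool list \<Rightarrow> bool list list \<Rightarrow> op list \<Rightarrow> bool" where
  "tilde_transformation u v ws ops \<longleftrightarrow>
     length ws = length ops + 1 \<and> ws ! 0 = u \<and> ws ! length ops = v \<and>
     (\<forall>k < length ops. apply_op (ops ! k) (ws ! k) (ws ! Suc k))"

definition dist_tilde :: "bool list \<Rightarrow> bool list \<Rightarrow> nat" where
  "dist_tilde u v = (LEAST h. \<exists>ws ops. length ops = h \<and> tilde_transformation u v ws ops)"

definition minimal_tilde_transformation ::
    "bool list \<Rightarrow> bool list \<Rightarrow> bool list list \<Rightarrow> op list \<Rightarrow> bool" where
  "minimal_tilde_transformation u v ws ops \<longleftrightarrow>
     tilde_transformation u v ws ops \<and> length ops = dist_tilde u v \<and>
     (\<forall>i. 1 \<le> i \<and> i \<le> length u \<longrightarrow>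
        card {k. k < length ops \<and> i \<in> modified (ops ! k)} \<le> 1)"

end

theory Submission
  imports Defs
begin

text \<open>
  The distance is computed by a left-to-right recursion: a matching first letter costs nothing,
  a mismatch is repaired either by replacing the first letter or, when the first two letters
  are crossed, by swapping them.  Every single operation lowers this cost by at most one, so it
  is a lower bound for the distance; conversely the recursion unfolds into a transformation of
  exactly that length whose operations touch pairwise disjoint sets of positions.
\<close>

fun tilde_cost :: "bool list \<Rightarrow> bool list \<Rightarrow> nat" where
  "tilde_cost (a # a' # u) (b # b' # v) =
     (if a = b then tilde_cost (a' # u) (b' # v)
      else if a' = b \<and> b' = a
        then Suc (min (tilde_cost (a' # u) (b' # v)) (tilde_cost u v))
      else Suc (tilde_cost (a' # u) (b' # v)))"
| "tilde_cost (a # u) (b # v) = (if a = b then tilde_cost u v else Suc (tilde_cost u v))"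
| "tilde_cost _ _ = 0"

lemma tilde_cost_Cons_le: "tilde_cost (x # u) (y # v) \<le> Suc (tilde_cost u v)"
  by (cases u; cases v) auto

lemma tilde_cost_le_Cons: "tilde_cost u v \<le> tilde_cost (x # u) (y # v)"
proof (cases u; cases v)
  fix a u' b v' assume "u = a # u'" "v = b # v'"
  then show ?thesis using tilde_cost_Cons_le[of a u' b v'] by auto
qed auto

lemma tilde_cost_Cons_same [simp]: "tilde_cost (x # u) (x # v) = tilde_cost u v"
  by (cases u; cases v) auto

lemma tilde_cost_self [simp]: "tilde_cost w w = 0"
  by (induction w) auto

lemma tilde_cost_toggle:
  "length u = length v \<Longrightarrow> j < length u \<Longrightarrow> tilde_cost u v \<le> Suc (tilde_cost (u[j := \<not> u ! j]) v)"
proof (induction u v arbitrary: j rule: tilde_cost.induct)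
  case (1 a a' u b b' v)
  consider "j = 0" | "j = Suc 0" | j'' where "j = Suc (Suc j'')"
    by (metis not0_implies_Suc)
  then show ?case
  proof cases
    case 1
    then show ?thesis
      using tilde_cost_Cons_le[of a "a' # u" b "b' # v"] tilde_cost_le_Cons[of "a' # u" "b' # v" "\<not> a" b]
        tilde_cost_Cons_le[of a' u b' v]
      by auto
  next
    case 2
    show ?thesis
    proof (cases "a = b")
      case True
      then show ?thesis using "1.IH"(1)[of 0] "1.prems" 2 by auto
    next
      case False
      then show ?thesis
        using 2 tilde_cost_Cons_le[of "\<not> a'" u b' v] tilde_cost_le_Cons[of u v "\<not> a'" b']
          tilde_cost_Cons_le[of a' u b' v] tilde_cost_le_Cons[of u v a' b']
        by (cases a; cases a'; cases b'; cases b) (auto simp: min_def)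
    qed
  next
    case 3
    with "1.prems" have "j'' < length u" by simp
    with 3 show ?thesis
      using "1.IH"(1)[of "Suc j''"] "1.IH"(2)[of "Suc j''"] "1.IH"(3)[of j''] "1.IH"(4)[of "Suc j''"] "1.prems"
      by (auto simp: min_def)
  qed
qed (auto simp: less_Suc_eq_0_disj)

lemma tilde_cost_swap:
  "length u = length v \<Longrightarrow> Suc j < length u \<Longrightarrow> u ! j \<noteq> u ! Suc j \<Longrightarrow>
     tilde_cost u v \<le> Suc (tilde_cost (u[j := u ! Suc j, Suc j := u ! j]) v)"
proof (induction u v arbitrary: j rule: tilde_cost.induct)
  case (1 a a' u b b' v)
  consider "j = 0" | "j = Suc 0" | j'' where "j = Suc (Suc j'')"
    by (metis not0_implies_Suc)
  then show ?case
  proof cases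
    case 1
    then show ?thesis
      using "1.prems" tilde_cost_Cons_le[of a' u b' v] tilde_cost_le_Cons[of u v a' b']
        tilde_cost_Cons_le[of a u b' v] tilde_cost_le_Cons[of u v a b']
      by (cases a; cases a'; cases b'; cases b) (auto simp: min_def)
  next
    case 2
    obtain x u' where u: "u = x # u'" using "1.prems" 2 by (cases u) auto
    obtain c v' where v: "v = c # v'" using "1.prems" u by (cases v) auto
    show ?thesis
    proof (cases "a = b")
      case True
      then show ?thesis using "1.IH"(1)[of 0] "1.prems" 2 by auto
    next
      case False
      have "tilde_cost (a # u') v \<le> Suc (tilde_cost (b # u') v)"
           "tilde_cost (b # u') v \<le> Suc (tilde_cost (a # u') v)"
        using tilde_cost_toggle[of "a # u'" v 0] tilde_cost_toggle[of "b # u'" v 0] "1.prems" u v False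
        by (cases a; cases b; simp)+
      then show ?thesis
        using False 2 "1.prems" u v tilde_cost_Cons_le[of b u' c v'] tilde_cost_Cons_le[of a u' c v']
          "1.IH"(4)[of 0]
        by (cases a; cases a'; cases b'; cases b; cases x) (auto simp: min_def)
    qed
  next
    case 3
    with "1.prems" have "Suc j'' < length u" by simp
    with 3 show ?thesis
      using "1.IH"(1)[of "Suc j''"] "1.IH"(2)[of "Suc j''"] "1.IH"(3)[of j''] "1.IH"(4)[of "Suc j''"] "1.prems"
      by (auto simp: min_def)
  qed
qed (auto simp: less_Suc_eq_0_disj)

lemma length_apply_op: "apply_op p w w' \<Longrightarrow> length w' = length w"
  by (cases p) auto

lemma tilde_cost_apply_op:
  assumes "apply_op p w w'" "length w = length v"
  shows "tilde_cost w v \<le> Suc (tilde_cost w' v)"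
proof (cases p)
  case (Repl i)
  with assms show ?thesis using tilde_cost_toggle[of w v "i - 1"] by auto
next
  case (Swap i)
  with assms show ?thesis using tilde_cost_swap[of w v "i - 1"] by auto
qed

inductive transforms :: "bool list \<Rightarrow> bool list \<Rightarrow> op list \<Rightarrow> bool" where
  transforms_Nil: "transforms w w []"
| transforms_Cons: "apply_op p w w' \<Longrightarrow> transforms w' v ops \<Longrightarrow> transforms w v (p # ops)"

lemma transforms_imp_tilde_transformation:
  "transforms u v ops \<Longrightarrow> \<exists>ws. tilde_transformation u v ws ops"
proof (induction rule: transforms.induct)
  case (transforms_Nil w)
  show ?case by (rule exI[of _ "[w]"]) (simp add: tilde_transformation_def)
next
  case (transforms_Cons p w w' v ops)
  then obtain ws where "tilde_transformation w' v ws ops" by blast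
  with transforms_Cons.hyps(1) show ?case
    by (intro exI[of _ "w # ws"]) (auto simp: tilde_transformation_def less_Suc_eq_0_disj)
qed

lemma tilde_transformation_imp_transforms:
  "tilde_transformation u v ws ops \<Longrightarrow> transforms u v ops"
proof (induction ops arbitrary: u ws)
  case Nil
  then show ?case by (auto simp: tilde_transformation_def intro: transforms_Nil)
next
  case (Cons p ops)
  then obtain w ws' where ws: "ws = w # ws'" by (cases ws) (auto simp: tilde_transformation_def)
  with Cons.prems have "tilde_transformation (ws' ! 0) v ws' ops" "apply_op p u (ws' ! 0)"
    by (auto simp: tilde_transformation_def)
  with Cons.IH show ?case by (blast intro: transforms_Cons)
qed

lemma tilde_cost_le_length: "transforms u v ops \<Longrightarrow> length u = length v \<Longrightarrow> tilde_cost u v \<le> length ops"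
  by (induction rule: transforms.induct) (use tilde_cost_apply_op length_apply_op in fastforce)+

lemma zero_notin_modified: "transforms u v ops \<Longrightarrow> p \<in> set ops \<Longrightarrow> 0 \<notin> modified p"
proof (induction rule: transforms.induct)
  case (transforms_Cons q w w' v ops)
  then show ?case by (cases q) auto
qed simp

fun shift_op :: "op \<Rightarrow> op" where
  "shift_op (Repl i) = Repl (Suc i)"
| "shift_op (Swap i) = Swap (Suc i)"

lemma modified_shift_op [simp]: "modified (shift_op p) = Suc ` modified p"
  by (cases p) auto

lemma apply_op_shift_op: "apply_op p w w' \<Longrightarrow> apply_op (shift_op p) (a # w) (a # w')"
  by (cases p) (auto simp: nth_Cons' split: nat.splits)

lemma transforms_shift: "transforms w v ops \<Longrightarrow> transforms (a # w) (a # v) (map shift_op ops)"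
  by (induction rule: transforms.induct) (auto intro: transforms.intros apply_op_shift_op)

fun disjoint_ops :: "op list \<Rightarrow> bool" where
  "disjoint_ops [] \<longleftrightarrow> True"
| "disjoint_ops (p # ops) \<longleftrightarrow> modified p \<inter> \<Union>(modified ` set ops) = {} \<and> disjoint_ops ops"

lemma disjoint_ops_shift: "disjoint_ops ops \<Longrightarrow> disjoint_ops (map shift_op ops)"
  by (induction ops) auto

lemma transforms_Repl_shift:
  assumes "transforms u v ops" "disjoint_ops ops" "a \<noteq> b"
  shows "transforms (a # u) (b # v) (Repl 1 # map shift_op ops)"
    and "disjoint_ops (Repl 1 # map shift_op ops)"
proof -
  have "apply_op (Repl 1) (a # u) (b # u)" using assms(3) by auto
  then show "transforms (a # u) (b # v) (Repl 1 # map shift_op ops)"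
    using transforms_Cons transforms_shift[OF assms(1)] by blast
  show "disjoint_ops (Repl 1 # map shift_op ops)"
    using disjoint_ops_shift[OF assms(2)] zero_notin_modified[OF assms(1)] by auto
qed

lemma transforms_Swap_shift:
  assumes "transforms u v ops" "disjoint_ops ops" "a \<noteq> b"
  shows "transforms (a # b # u) (b # a # v) (Swap 1 # map shift_op (map shift_op ops))"
    and "disjoint_ops (Swap 1 # map shift_op (map shift_op ops))"
proof -
  have "apply_op (Swap 1) (a # b # u) (b # a # u)" using assms(3) by auto
  then show "transforms (a # b # u) (b # a # v) (Swap 1 # map shift_op (map shift_op ops))"
    using transforms_Cons transforms_shift[OF transforms_shift[OF assms(1)]] by blast
  show "disjoint_ops (Swap 1 # map shift_op (map shift_op ops))"
    using disjoint_ops_shift[OF disjoint_ops_shift[OF assms(2)]] zero_notin_modified[OF assms(1)] by auto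
qed

lemma disjoint_transforms_of_length_tilde_cost:
  "length u = length v \<Longrightarrow> \<exists>ops. transforms u v ops \<and> length ops = tilde_cost u v \<and> disjoint_ops ops"
proof (induction u v rule: tilde_cost.induct)
  case (1 a a' u b b' v)
  show ?case
  proof (cases "a = b")
    case True
    with 1 obtain ops where "transforms (a' # u) (b' # v) ops" "length ops = tilde_cost (a' # u) (b' # v)"
      "disjoint_ops ops" by auto
    with True show ?thesis
      by (intro exI[of _ "map shift_op ops"]) (auto intro: transforms_shift disjoint_ops_shift)
  next
    case mismatch: False
    show ?thesis
    proof (cases "a' = b \<and> b' = a \<and> tilde_cost u v < tilde_cost (a' # u) (b' # v)")
      case True
      with 1 mismatch obtain ops where "transforms u v ops" "length ops = tilde_cost u v" "disjoint_ops ops"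
        by auto
      with True mismatch show ?thesis
        using transforms_Swap_shift[of u v ops a b]
        by (intro exI[of _ "Swap 1 # map shift_op (map shift_op ops)"]) auto
    next
      case False
      with 1 mismatch obtain ops where "transforms (a' # u) (b' # v) ops"
        "length ops = tilde_cost (a' # u) (b' # v)" "disjoint_ops ops"
        by (cases "a' = b \<and> b' = a") auto
      with False mismatch show ?thesis
        using transforms_Repl_shift[of "a' # u" "b' # v" ops a b]
        by (intro exI[of _ "Repl 1 # map shift_op ops"]) auto
    qed
  qed
next
  case ("2_1" a b v)
  then show ?case using transforms_Repl_shift[of "[]" "[]" "[]" a b] by (auto intro: transforms_Nil)
next
  case ("2_2" a u b)
  then show ?case using transforms_Repl_shift[of "[]" "[]" "[]" a b] by (auto intro: transforms_Nil)
qed (auto intro: transforms_Nil)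

lemma dist_tilde_eq_tilde_cost:
  assumes "length u = length v"
  shows "dist_tilde u v = tilde_cost u v"
  unfolding dist_tilde_def
proof (rule Least_equality)
  obtain ops where "transforms u v ops" "length ops = tilde_cost u v"
    using disjoint_transforms_of_length_tilde_cost[OF assms] by blast
  then show "\<exists>ws ops. length ops = tilde_cost u v \<and> tilde_transformation u v ws ops"
    using transforms_imp_tilde_transformation by blast
next
  fix h assume "\<exists>ws ops. length ops = h \<and> tilde_transformation u v ws ops"
  then show "tilde_cost u v \<le> h"
    using tilde_cost_le_length[OF tilde_transformation_imp_transforms assms] by blast
qed

lemma disjoint_ops_nth:
  "disjoint_ops ops \<Longrightarrow> k < l \<Longrightarrow> l < length ops \<Longrightarrow> modified (ops ! k) \<inter> modified (ops ! l) = {}"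
proof (induction ops arbitrary: k l)
  case (Cons p ops)
  then obtain l' where l: "l = Suc l'" by (cases l) auto
  show ?case
  proof (cases k)
    case 0
    have "ops ! l' \<in> set ops" using Cons.prems l by auto
    with Cons.prems 0 l show ?thesis by fastforce
  next
    case (Suc k')
    with Cons l show ?thesis by auto
  qed
qed simp

lemma disjoint_ops_card_modifying_le_1:
  assumes "disjoint_ops ops"
  shows "card {k. k < length ops \<and> i \<in> modified (ops ! k)} \<le> 1"
proof -
  have "k = l" if "k < length ops" "l < length ops" "i \<in> modified (ops ! k)" "i \<in> modified (ops ! l)" for k l
    using that disjoint_ops_nth[OF assms, of k l] disjoint_ops_nth[OF assms, of l k]
    by (cases k l rule: linorder_cases) auto
  then show ?thesis by (auto simp: card_le_Suc0_iff_eq)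
qed

theorem lemma1:
  fixes u v :: "bool list" and m :: nat
  assumes "m \<ge> 1" and "length u = m" and "length v = m"
  shows "\<exists>ws ops. minimal_tilde_transformation u v ws ops"
proof -
  have len: "length u = length v" using assms by simp
  obtain ops where ops: "transforms u v ops" "length ops = tilde_cost u v" "disjoint_ops ops"
    using disjoint_transforms_of_length_tilde_cost[OF len] by blast
  obtain ws where "tilde_transformation u v ws ops"
    using transforms_imp_tilde_transformation[OF ops(1)] by blast
  then show ?thesis
    unfolding minimal_tilde_transformation_def
    using ops dist_tilde_eq_tilde_cost[OF len] disjoint_ops_card_modifying_le_1 by metis
qed

end
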